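(* Let $\omega(r)=\exp(\varepsilon r)$ and $\Omega(r)=\exp(\delta r)$, where $\delta>\varepsilon>0$. Then for each $r>0$ there exists $R>0$ such that $\omega^n(R)\ge\Omega^n(r)$ for all $n\in\mathbb N$.
   Context: $\omega^n,\Omega^n$ denote $n$-th iterates. *)

theory Defs
  imports Complex_Main
begin

end

theory Submission
  imports Defs "HOL-Real_Asymp.Real_Asymp"
begin

(*
  The proof rescales the starting
  point: we find a constant a \<ge> 1 with
      a * \<Omega>(y) \<le> \<omega>(a * y)     for all y \<ge> m,   where m = min r 1,
  i.e. the linear map y \<mapsto> a y carries \<Omega> below \<omega> on [m, \<infinity>).  Such an a exists
  because ln a + \<delta> y \<le> \<epsilon> a y for y \<ge> m as soon as (\<epsilon> a - \<delta>) m - ln a \<ge> 0,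
  which holds for all large a.  Since \<Omega> maps [m, \<infinity>) into itself and \<omega> is
  monotone, a general comparison principle for iterates gives
      a * \<Omega>\<^sup>n(r) \<le> \<omega>\<^sup>n(a r),
  and a \<ge> 1 together with \<Omega>\<^sup>n(r) \<ge> 0 yields the theorem with R = a r.
*)

lemma funpow_in_invariant_set:
  assumes "\<And>y. y \<in> S \<Longrightarrow> g y \<in> S" and "r \<in> S"
  shows "(g ^^ n) r \<in> S"
  by (induction n) (use assms in auto)

lemma funpow_comparison:
  fixes f :: "'b::order \<Rightarrow> 'b"
  assumes mono_f: "mono f"
    and invariant: "\<And>y. y \<in> S \<Longrightarrow> g y \<in> S"
    and below: "\<And>y. y \<in> S \<Longrightarrow> h (g y) \<le> f (h y)"
    and "r \<in> S"
  shows "h ((g ^^ n) r) \<le> (f ^^ n) (h r)"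
proof (induction n)
  case 0
  show ?case by simp
next
  case (Suc n)
  have "(g ^^ n) r \<in> S"
    using invariant \<open>r \<in> S\<close> by (rule funpow_in_invariant_set)
  then have "h ((g ^^ Suc n) r) \<le> f (h ((g ^^ n) r))"
    using below by simp
  also have "\<dots> \<le> f ((f ^^ n) (h r))"
    using mono_f Suc.IH by (rule monoD)
  finally show ?case by simp
qed

text \<open>Taking logarithms, it suffices that
  \<open>\<delta> \<le> \<epsilon> a\<close> and \<open>ln a \<le> (\<epsilon> a - \<delta>) m\<close>, which hold for all sufficiently large \<open>a\<close>.\<close>

lemma exp_scaling_constant:
  fixes \<epsilon> \<delta> m :: real
  assumes "0 < \<epsilon>" and "0 < m"
  shows "\<exists>a\<ge>1. \<forall>y\<ge>m. a * exp (\<delta> * y) \<le> exp (\<epsilon> * (a * y))"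
proof -
  have "filterlim (\<lambda>a. (\<epsilon> * a - \<delta>) * m - ln a) at_top at_top"
    using assms by real_asymp
  then have "eventually (\<lambda>a. 0 \<le> (\<epsilon> * a - \<delta>) * m - ln a) at_top"
    unfolding filterlim_at_top by blast
  then have "eventually (\<lambda>a. ln a \<le> (\<epsilon> * a - \<delta>) * m) at_top"
    by (rule eventually_mono) simp
  moreover have "eventually (\<lambda>a. \<delta> \<le> \<epsilon> * a) at_top"
    using assms by real_asymp
  moreover have "eventually (\<lambda>a::real. 1 \<le> a) at_top"
    by real_asymp
  ultimately have "eventually (\<lambda>a. ln a \<le> (\<epsilon> * a - \<delta>) * m \<and> \<delta> \<le> \<epsilon> * a \<and> 1 \<le> a) at_top"
    by (intro eventually_conj)
  then obtain a where
    log_bound: "ln a \<le> (\<epsilon> * a - \<delta>) * m" and slope: "\<delta> \<le> \<epsilon> * a" and "1 \<le> a"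
    using eventually_happens'[OF trivial_limit_at_top_linorder] by blast
  have "a * exp (\<delta> * y) \<le> exp (\<epsilon> * (a * y))" if "m \<le> y" for y
  proof -
    have "(\<epsilon> * a - \<delta>) * m \<le> (\<epsilon> * a - \<delta>) * y"
      using slope that by (intro mult_left_mono) auto
    then have "ln a + \<delta> * y \<le> \<epsilon> * (a * y)"
      using log_bound by (simp add: algebra_simps)
    then have "exp (ln a + \<delta> * y) \<le> exp (\<epsilon> * (a * y))"
      by simp
    then show ?thesis
      using \<open>1 \<le> a\<close> by (simp add: exp_add)
  qed
  then show ?thesis
    using \<open>1 \<le> a\<close> by blast
qed

lemma exp_lower_bound:
  fixes \<delta> m y :: real
  assumes "0 \<le> \<delta>" and "0 \<le> y" and "m \<le> 1"
  shows "m \<le> exp (\<delta> * y)"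
proof -
  have "1 \<le> exp (\<delta> * y)"
    using assms by simp
  with \<open>m \<le> 1\<close> show ?thesis
    by linarith
qed

theorem lemma3p3:
  fixes \<epsilon> \<delta> r :: real
  assumes "0 < \<epsilon>" and "\<epsilon> < \<delta>" and "0 < r"
  shows "\<exists>R>0. \<forall>n::nat. ((\<lambda>x. exp (\<epsilon> * x)) ^^ n) R \<ge> ((\<lambda>x. exp (\<delta> * x)) ^^ n) r"
proof -
  let ?\<omega> = "\<lambda>x. exp (\<epsilon> * x)" and ?\<Omega> = "\<lambda>x. exp (\<delta> * x)"
  define m where "m = min r 1"
  have "0 < m" "m \<le> r" "m \<le> 1"
    using \<open>0 < r\<close> by (auto simp: m_def)
  obtain a where "1 \<le> a" and scaling: "\<And>y. m \<le> y \<Longrightarrow> a * ?\<Omega> y \<le> ?\<omega> (a * y)"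
    using exp_scaling_constant[OF \<open>0 < \<epsilon>\<close> \<open>0 < m\<close>] by blast
  have invariant: "?\<Omega> y \<in> {m..}" if "y \<in> {m..}" for y
    using exp_lower_bound[of \<delta> y m] that \<open>0 < m\<close> \<open>m \<le> 1\<close> \<open>0 < \<epsilon>\<close> \<open>\<epsilon> < \<delta>\<close> by simp
  have mono_\<omega>: "mono ?\<omega>"
    using \<open>0 < \<epsilon>\<close> by (auto intro: monoI)
  have "(?\<Omega> ^^ n) r \<le> (?\<omega> ^^ n) (a * r)" for n
  proof -
    have "(?\<Omega> ^^ n) r \<in> {m..}"
      using invariant \<open>m \<le> r\<close> by (intro funpow_in_invariant_set) auto
    then have "(?\<Omega> ^^ n) r \<le> a * (?\<Omega> ^^ n) r"
      using \<open>1 \<le> a\<close> \<open>0 < m\<close> by (simp add: mult_le_cancel_right1)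
    also have "\<dots> \<le> (?\<omega> ^^ n) (a * r)"
      using funpow_comparison[OF mono_\<omega> invariant, where h="\<lambda>y. a * y" and r=r and n=n]
        scaling \<open>m \<le> r\<close> by simp
    finally show ?thesis .
  qed
  moreover have "0 < a * r"
    using \<open>1 \<le> a\<close> \<open>0 < r\<close> by simp
  ultimately show ?thesis
    by blast
qed

end
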